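(* Let $N, N_y, M, p \in \mathbb{N}$ with $p\le N$, $X \in \mathbb{R}^{N \times M}$, $Y \in \mathbb{R}^{N_y \times M}$, $\lambda \ge 0$, $\Omega=\{1,\dots,N\}$, let $\bar S_0\subset\cdots\subset\bar S_p$ with feasible sets $\mathcal{I}_1,\dots,\mathcal{I}_p$ be a greedy sequence, and let $\xi^{(k)},\theta^{(k)},\Xi^{(k)},\Theta^{(k)}$ be defined as in the context. Let $f_i^{(k)} := \|(Q^{xy}_i(\bar S_k))^\top\|^2$ and $g_i^{(k)} := Q^{xx}_{i,i}(\bar S_k)$. Then for any $k\in\{1,\dots,p\}$ and $i \in \mathcal{I}_k$, \begin{align*} f_i^{(k)} &= f_i^{(k-1)} - \xi^{(k)}_i\Bigl(2X_iY^\top\theta^{(k)} - 2\,\Xi^{(k-1)}_i \Theta^{(k-1)\top}\theta^{(k)} - \|\theta^{(k)}\|^2 \xi^{(k)}_i\Bigr),\\ g_i^{(k)} &= g_i^{(k-1)} - \xi^{(k)}_i\xi^{(k)}_i. \end{align*}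
   Context: Notation: for a matrix $A$ and an ordered index set $S$, $A_S$ is the submatrix of rows indexed by $S$, $A_{S,S}$ the principal submatrix; $A_i$ is row $i$ of $A$, $A_{i,i}$ its $(i,i)$ entry; $v_i$ is the $i$th component of vector $v$; $\|\cdot\|$ is the Euclidean norm; $(I_N)_s^\top$ is the $s$th canonical unit vector. $P^{xx} = XX^\top + \lambda I_N$, $P^{xy} = XY^\top$. $Q^{xx}(\emptyset)=P^{xx}$, $Q^{xy}(\emptyset)=P^{xy}$, and for $|S|\ge1$ with $P^{xx}_{S,S}\succ0$: $Q^{xx}(S) = P^{xx} - (P^{xx}_S)^\top (P^{xx}_{S,S})^{-1} P^{xx}_S$, $Q^{xy}(S) = P^{xy} - (P^{xx}_S)^\top (P^{xx}_{S,S})^{-1} P^{xy}_S$. $J(S) = \operatorname{tr}\{ Y X_S^\top (X_S X_S^\top + \lambda I_{|S|})^{-1} X_S Y^\top \}$ for feasible $S$, $J(\emptyset)=0$. Greedy sequence: $\bar S_0=\emptyset$; for $k=1,\dots,p$, $\mathcal{I}_k = \{ i\in\Omega\setminus\bar S_{k-1} : P^{xx}_{S',S'}\succ0,\ S'=\bar S_{k-1}\cup\{i\}\}$ (assumed nonempty), $\bar s_k \in \arg\max_{i\in\mathcal{I}_k}\{J(\bar S_{k-1}\cup\{i\}) - J(\bar S_{k-1})\}$, $\bar S_k = \bar S_{k-1}\cup\{\bar s_k\}$. Recursion, starting from empty $\Xi^{(0)}\in\mathbb{R}^{N\times0}$, $\Theta^{(0)}\in\mathbb{R}^{N_y\times0}$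 (products with them equal to zero): $\delta^{(k)} = X X_{\bar s_k}^\top + \lambda (I_N)_{\bar s_k}^\top - \Xi^{(k-1)}(\Xi^{(k-1)}_{\bar s_k})^\top$, $\xi^{(k)} = \delta^{(k)}/\sqrt{\delta^{(k)}_{\bar s_k}}$, $\theta^{(k)} = (Y X_{\bar s_k}^\top - \Theta^{(k-1)}(\Xi^{(k-1)}_{\bar s_k})^\top)/\sqrt{\delta^{(k)}_{\bar s_k}}$, $\Xi^{(k)}=[\Xi^{(k-1)},\xi^{(k)}]$, $\Theta^{(k)}=[\Theta^{(k-1)},\theta^{(k)}]$. *)

theory Defs
  imports "Jordan_Normal_Form.Gauss_Jordan_Elimination" "Jordan_Normal_Form.DL_Submatrix"
begin

text \<open>Matrices are Jordan_Normal_Form matrices; indices are 0-based, so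
  Omega = {0..<N}. Rows of a matrix indexed by a set S are taken in increasing
  order (the quantities below do not depend on the order).\<close>

definition Pxx :: "real mat \<Rightarrow> real \<Rightarrow> real mat" where
  "Pxx X lam = X * transpose_mat X + lam \<cdot>\<^sub>m 1\<^sub>m (dim_row X)"

definition Pxy :: "real mat \<Rightarrow> real mat \<Rightarrow> real mat" where
  "Pxy X Y = X * transpose_mat Y"

definition rows_of :: "'a mat \<Rightarrow> nat set \<Rightarrow> 'a mat" where
  "rows_of A S = submatrix A S UNIV"

definition prin_sub :: "'a mat \<Rightarrow> nat set \<Rightarrow> 'a mat" where
  "prin_sub A S = submatrix A S S"

definition pos_def_mat :: "real mat \<Rightarrow> bool" where
  "pos_def_mat A \<longleftrightarrow> A \<in> carrier_mat (dim_row A) (dim_row A) \<and>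
     (\<forall>v \<in> carrier_vec (dim_row A). v \<noteq> 0\<^sub>v (dim_row A) \<longrightarrow> v \<bullet> (A *\<^sub>v v) > 0)"

definition minv :: "real mat \<Rightarrow> real mat" where
  "minv A = the (mat_inverse A)"

definition mtrace :: "real mat \<Rightarrow> real" where
  "mtrace A = (\<Sum>i<dim_row A. A $$ (i, i))"

definition feasible :: "real mat \<Rightarrow> real \<Rightarrow> nat set \<Rightarrow> bool" where
  "feasible X lam S \<longleftrightarrow> pos_def_mat (prin_sub (Pxx X lam) S)"

definition Qxx :: "real mat \<Rightarrow> real \<Rightarrow> nat set \<Rightarrow> real mat" where
  "Qxx X lam S = (if S = {} then Pxx X lam else
     Pxx X lam - transpose_mat (rows_of (Pxx X lam) S) * minv (prin_sub (Pxx X lam) S)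
                 * rows_of (Pxx X lam) S)"

definition Qxy :: "real mat \<Rightarrow> real mat \<Rightarrow> real \<Rightarrow> nat set \<Rightarrow> real mat" where
  "Qxy X Y lam S = (if S = {} then Pxy X Y else
     Pxy X Y - transpose_mat (rows_of (Pxx X lam) S) * minv (prin_sub (Pxx X lam) S)
                 * rows_of (Pxy X Y) S)"

definition Jfun :: "real mat \<Rightarrow> real mat \<Rightarrow> real \<Rightarrow> nat set \<Rightarrow> real" where
  "Jfun X Y lam S = (if S = {} then 0 else
     mtrace (Y * transpose_mat (rows_of X S)
       * minv (rows_of X S * transpose_mat (rows_of X S) + lam \<cdot>\<^sub>m 1\<^sub>m (card S))
       * rows_of X S * transpose_mat Y))"

definition Sbar :: "(nat \<Rightarrow> nat) \<Rightarrow> nat \<Rightarrow> nat set" where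
  "Sbar sb k = sb ` {1..k}"

definition Ifeas :: "real mat \<Rightarrow> real \<Rightarrow> (nat \<Rightarrow> nat) \<Rightarrow> nat \<Rightarrow> nat set" where
  "Ifeas X lam sb k = {i \<in> {0..<dim_row X} - Sbar sb (k - 1).
       feasible X lam (Sbar sb (k - 1) \<union> {i})}"

definition is_greedy :: "real mat \<Rightarrow> real mat \<Rightarrow> real \<Rightarrow> nat \<Rightarrow> (nat \<Rightarrow> nat) \<Rightarrow> bool" where
  "is_greedy X Y lam p sb \<longleftrightarrow> (\<forall>k \<in> {1..p}.
      Ifeas X lam sb k \<noteq> {} \<and> sb k \<in> Ifeas X lam sb k \<and>
      (\<forall>i \<in> Ifeas X lam sb k.
         Jfun X Y lam (Sbar sb (k - 1) \<union> {i}) - Jfun X Y lam (Sbar sb (k - 1))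
         \<le> Jfun X Y lam (Sbar sb k) - Jfun X Y lam (Sbar sb (k - 1))))"

text \<open>The recursion: XiTh X Y lam sb k = (Xi^(k), Theta^(k)), each a list of k
  columns; a column xi^(l) is a function i \<mapsto> xi^(l)_i (i < N), and theta^(l)
  is j \<mapsto> theta^(l)_j (j < N_y). Column l-1 of the lists is xi^(l).\<close>
fun XiTh :: "real mat \<Rightarrow> real mat \<Rightarrow> real \<Rightarrow> (nat \<Rightarrow> nat) \<Rightarrow> nat
    \<Rightarrow> (nat \<Rightarrow> real) list \<times> (nat \<Rightarrow> real) list" where
  "XiTh X Y lam sb 0 = ([], [])"
| "XiTh X Y lam sb (Suc k) =
    (let (Xi, Th) = XiTh X Y lam sb k;
         s = sb (Suc k);
         d = (\<lambda>i. (X * transpose_mat X) $$ (i, s) + (if i = s then lam else 0)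
                  - (\<Sum>l<k. (Xi ! l) i * (Xi ! l) s));
         r = sqrt (d s);
         xi = (\<lambda>i. d i / r);
         th = (\<lambda>j. ((Y * transpose_mat X) $$ (j, s) - (\<Sum>l<k. (Th ! l) j * (Xi ! l) s)) / r)
     in (Xi @ [xi], Th @ [th]))"

definition xi :: "real mat \<Rightarrow> real mat \<Rightarrow> real \<Rightarrow> (nat \<Rightarrow> nat) \<Rightarrow> nat \<Rightarrow> nat \<Rightarrow> real" where
  "xi X Y lam sb k = fst (XiTh X Y lam sb k) ! (k - 1)"

definition theta :: "real mat \<Rightarrow> real mat \<Rightarrow> real \<Rightarrow> (nat \<Rightarrow> nat) \<Rightarrow> nat \<Rightarrow> nat \<Rightarrow> real" where
  "theta X Y lam sb k = snd (XiTh X Y lam sb k) ! (k - 1)"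

definition f_val :: "real mat \<Rightarrow> real mat \<Rightarrow> real \<Rightarrow> (nat \<Rightarrow> nat) \<Rightarrow> nat \<Rightarrow> nat \<Rightarrow> real" where
  "f_val X Y lam sb k i = (\<Sum>j<dim_row Y. (Qxy X Y lam (Sbar sb k) $$ (i, j))^2)"

definition g_val :: "real mat \<Rightarrow> real \<Rightarrow> (nat \<Rightarrow> nat) \<Rightarrow> nat \<Rightarrow> nat \<Rightarrow> real" where
  "g_val X lam sb k i = Qxx X lam (Sbar sb k) $$ (i, i)"

end

(*
  The recursion for xi and theta is symmetric Gaussian elimination: with
  R_k = P^xx - Xi^(k) Xi^(k)^T, R^xy_k = P^xy - Xi^(k) Theta^(k)^T and pivot s = sb (k+1),
  one has xi^(k+1) = R_k e_s / sqrt (R_k(s,s)), hence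
  R_(k+1) = R_k - R_k e_s e_s^T R_k / R_k(s,s) and similarly for R^xy.
  By induction each residual has the form B - P^xx_(.,S) L and vanishes on the rows in
  S = Sbar k.  Since P^xx_(S,S) is positive definite, these two properties determine the
  Schur complement uniquely, so Q^xx(Sbar k) = R_k and Q^xy(Sbar k) = R^xy_k.  The same
  representation exhibits the next pivot R_k(s,s) as the quadratic form of P^xx_(S+s,S+s)
  at e_s - L(.,s) /= 0, so it is positive.  The two identities are then the diagonal and
  the squared row norm of the rank-one updates R_k = R_(k-1) - xi^(k) xi^(k)^T and
  R^xy_k = R^xy_(k-1) - xi^(k) theta^(k)^T.
*)

theory Submission
  imports Defs "Jordan_Normal_Form.Determinant"
begin

lemma bij_betw_pick:
  assumes "finite S"
  shows "bij_betw (pick S) {..<card S} S"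
proof (rule bij_betw_imageI)
  show "inj_on (pick S) {..<card S}"
  proof (rule inj_onI)
    fix x y assume x: "x \<in> {..<card S}" and y: "y \<in> {..<card S}" and e: "pick S x = pick S y"
    have "x = card {a\<in>S. a < pick S x}" using card_pick_le x by simp
    also have "\<dots> = y" using e card_pick_le y by simp
    finally show "x = y" .
  qed
  show "pick S ` {..<card S} = S"
  proof
    show "pick S ` {..<card S} \<subseteq> S" using pick_in_set_le by auto
    show "S \<subseteq> pick S ` {..<card S}"
    proof
      fix t assume t: "t \<in> S"
      have "{a\<in>S. a < t} \<subset> S" using t by auto
      then have "card {a\<in>S. a < t} < card S" by (rule psubset_card_mono[OF assms])
      moreover have "t = pick S (card {a\<in>S. a < t})" using pick_card_in_set[OF t] by simp
      ultimately show "t \<in> pick S ` {..<card S}" by blast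
    qed
  qed
qed

lemma sum_pick: "finite S \<Longrightarrow> (\<Sum>a<card S. f (pick S a)) = sum f S"
  using sum.reindex_bij_betw[OF bij_betw_pick] by blast

lemma
  assumes P: "P \<in> carrier_mat N N" and S: "S \<subseteq> {..<N}"
  shows carrier_prin_sub: "prin_sub P S \<in> carrier_mat (card S) (card S)"
    and index_prin_sub: "a < card S \<Longrightarrow> b < card S \<Longrightarrow> prin_sub P S $$ (a, b) = P $$ (pick S a, pick S b)"
proof -
  have rows: "{i. i < dim_row P \<and> i \<in> S} = S" and cols: "{i. i < dim_col P \<and> i \<in> S} = S"
    using P S by auto
  show "prin_sub P S \<in> carrier_mat (card S) (card S)"
    unfolding prin_sub_def by (rule carrier_matI) (simp_all only: dim_submatrix rows cols)
  show "a < card S \<Longrightarrow> b < card S \<Longrightarrow> prin_sub P S $$ (a, b) = P $$ (pick S a, pick S b)"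
    unfolding prin_sub_def by (rule submatrix_index) (simp_all only: rows cols)
qed

lemma
  assumes B: "B \<in> carrier_mat N n" and S: "S \<subseteq> {..<N}"
  shows carrier_rows_of: "rows_of B S \<in> carrier_mat (card S) n"
    and index_rows_of: "a < card S \<Longrightarrow> j < n \<Longrightarrow> rows_of B S $$ (a, j) = B $$ (pick S a, j)"
proof -
  have rows: "{i. i < dim_row B \<and> i \<in> S} = S" and cols: "card {j. j < dim_col B \<and> j \<in> UNIV} = n"
    using B S by auto
  show "rows_of B S \<in> carrier_mat (card S) n"
    unfolding rows_of_def by (rule carrier_matI) (simp_all only: dim_submatrix rows cols)
  show "rows_of B S $$ (a, j) = B $$ (pick S a, j)" if "a < card S" "j < n"
  proof -
    have "submatrix B S UNIV $$ (a, j) = B $$ (pick S a, pick UNIV j)"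
      by (rule submatrix_index) (use that in \<open>simp_all only: rows cols\<close>)
    then show ?thesis unfolding rows_of_def pick_UNIV .
  qed
qed

lemma prin_sub_mult_vec_pick:
  assumes P: "P \<in> carrier_mat N N" and S: "S \<subseteq> {..<N}" and a: "a < card S"
  shows "(prin_sub P S *\<^sub>v vec (card S) (\<lambda>b. w (pick S b))) $ a
           = (\<Sum>t\<in>S. P $$ (pick S a, t) * w t)"
proof -
  have "finite S" using S finite_subset by blast
  have "(prin_sub P S *\<^sub>v vec (card S) (\<lambda>b. w (pick S b))) $ a
          = (\<Sum>b<card S. P $$ (pick S a, pick S b) * w (pick S b))"
    using carrier_prin_sub[OF P S] index_prin_sub[OF P S a]
    by (simp add: a scalar_prod_def atLeast0LessThan)
  also have "\<dots> = (\<Sum>t\<in>S. P $$ (pick S a, t) * w t)"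
    using sum_pick[OF \<open>finite S\<close>] .
  finally show ?thesis .
qed

lemma quadratic_form_prin_sub:
  assumes P: "P \<in> carrier_mat N N" and S: "S \<subseteq> {..<N}"
    and v: "v = vec (card S) (\<lambda>a. w (pick S a))"
  shows "v \<bullet> (prin_sub P S *\<^sub>v v) = (\<Sum>u\<in>S. w u * (\<Sum>t\<in>S. P $$ (u, t) * w t))"
proof -
  have "finite S" using S finite_subset by blast
  have "v \<bullet> (prin_sub P S *\<^sub>v v) = (\<Sum>a<card S. v $ a * (prin_sub P S *\<^sub>v v) $ a)"
    using carrier_prin_sub[OF P S] by (simp add: v scalar_prod_def atLeast0LessThan)
  also have "\<dots> = (\<Sum>a<card S. w (pick S a) * (\<Sum>t\<in>S. P $$ (pick S a, t) * w t))"
    using prin_sub_mult_vec_pick[OF P S] by (simp add: v)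
  also have "\<dots> = (\<Sum>u\<in>S. w u * (\<Sum>t\<in>S. P $$ (u, t) * w t))"
    using sum_pick[OF \<open>finite S\<close>] .
  finally show ?thesis .
qed

lemma pos_def_mat_mult_vec_eq_0:
  assumes "pos_def_mat A" and "v \<in> carrier_vec (dim_row A)" and "A *\<^sub>v v = 0\<^sub>v (dim_row A)"
  shows "v = 0\<^sub>v (dim_row A)"
proof (rule ccontr)
  assume "v \<noteq> 0\<^sub>v (dim_row A)"
  then have "v \<bullet> (A *\<^sub>v v) > 0" using assms(1,2) unfolding pos_def_mat_def by blast
  then show False using assms(2,3) by simp
qed

lemma pos_def_mat_minv:
  assumes pd: "pos_def_mat A"
  shows "minv A * A = 1\<^sub>m (dim_row A)" and "minv A \<in> carrier_mat (dim_row A) (dim_row A)"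
proof -
  let ?n = "dim_row A"
  have A: "A \<in> carrier_mat ?n ?n" using pd unfolding pos_def_mat_def by blast
  have "det A \<noteq> 0"
  proof
    assume "det A = 0"
    then obtain v where "v \<in> carrier_vec ?n" "v \<noteq> 0\<^sub>v ?n" "A *\<^sub>v v = 0\<^sub>v ?n"
      using det_0_iff_vec_prod_zero[OF A] by blast
    then show False using pos_def_mat_mult_vec_eq_0[OF pd] by blast
  qed
  then have "A \<in> Units (ring_mat TYPE(real) ?n ())" by (rule det_non_zero_imp_unit[OF A])
  then obtain B where "mat_inverse A = Some B" using mat_inverse(1)[OF A] by fastforce
  then show "minv A * A = 1\<^sub>m ?n" "minv A \<in> carrier_mat ?n ?n"
    using mat_inverse(2)[OF A] by (auto simp: minv_def)
qed

definition is_residual :: "real mat \<Rightarrow> real mat \<Rightarrow> nat set \<Rightarrow> (nat \<Rightarrow> nat \<Rightarrow> real) \<Rightarrow> bool" where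
  "is_residual P B S T \<longleftrightarrow>
     (\<exists>L. \<forall>i<dim_row B. \<forall>j<dim_col B. T i j = B $$ (i, j) - (\<Sum>t\<in>S. P $$ (i, t) * L t j)) \<and>
     (\<forall>t\<in>S. \<forall>j<dim_col B. T t j = 0)"

definition schur_compl :: "real mat \<Rightarrow> real mat \<Rightarrow> nat set \<Rightarrow> real mat" where
  "schur_compl P B S = B - transpose_mat (rows_of P S) * minv (prin_sub P S) * rows_of B S"

lemma is_residual_insert:
  fixes P B :: "real mat" and A T T' :: "nat \<Rightarrow> nat \<Rightarrow> real"
  assumes P: "P \<in> carrier_mat N N" and B: "B \<in> carrier_mat N n"
    and S: "insert s S \<subseteq> {..<N}" "s \<notin> S"
    and A: "is_residual P P S A" and pivot: "A s s \<noteq> 0"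
    and T: "is_residual P B S T"
    and T': "\<And>i j. i < N \<Longrightarrow> j < n \<Longrightarrow> T' i j = T i j - A i s * T s j / A s s"
  shows "is_residual P B (insert s S) T'"
proof -
  have fin: "finite S" using S(1) finite_subset by auto
  obtain LA where LA: "\<And>i j. i < N \<Longrightarrow> j < N \<Longrightarrow> A i j = P $$ (i, j) - (\<Sum>t\<in>S. P $$ (i, t) * LA t j)"
    and A0: "\<And>t j. t \<in> S \<Longrightarrow> j < N \<Longrightarrow> A t j = 0"
    using A P unfolding is_residual_def by auto
  obtain L where L: "\<And>i j. i < N \<Longrightarrow> j < n \<Longrightarrow> T i j = B $$ (i, j) - (\<Sum>t\<in>S. P $$ (i, t) * L t j)"
    and T0: "\<And>t j. t \<in> S \<Longrightarrow> j < n \<Longrightarrow> T t j = 0"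
    using T B unfolding is_residual_def by auto
  have sN: "s < N" using S(1) by auto
  define c where "c j = T s j / A s s" for j
  define L' where "L' t j = (if t = s then c j else L t j - LA t s * c j)" for t j
  have "T' i j = B $$ (i, j) - (\<Sum>t\<in>insert s S. P $$ (i, t) * L' t j)" if ij: "i < N" "j < n" for i j
  proof -
    have "(\<Sum>t\<in>S. P $$ (i, t) * L' t j) = (\<Sum>t\<in>S. P $$ (i, t) * L t j - c j * (P $$ (i, t) * LA t s))"
      using S(2) by (intro sum.cong) (auto simp: L'_def algebra_simps)
    then have "(\<Sum>t\<in>insert s S. P $$ (i, t) * L' t j)
        = c j * (P $$ (i, s) - (\<Sum>t\<in>S. P $$ (i, t) * LA t s)) + (\<Sum>t\<in>S. P $$ (i, t) * L t j)"
      using fin S(2) by (simp add: L'_def sum_subtractf sum_distrib_left algebra_simps)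
    also have "\<dots> = c j * A i s + (B $$ (i, j) - T i j)"
      using LA[OF ij(1) sN] L[OF ij] by simp
    finally show ?thesis using T'[OF ij] by (simp add: c_def)
  qed
  moreover have "T' t j = 0" if "t \<in> insert s S" "j < n" for t j
  proof (cases "t = s")
    case True
    then show ?thesis using T' sN that(2) pivot by simp
  next
    case False
    then have "t \<in> S" "t < N" using that(1) S(1) by auto
    then show ?thesis using T' T0 A0 sN that(2) by simp
  qed
  ultimately show ?thesis using B unfolding is_residual_def by auto
qed

lemma is_residual_pivot_pos:
  fixes P :: "real mat" and A :: "nat \<Rightarrow> nat \<Rightarrow> real"
  assumes P: "P \<in> carrier_mat N N" and S: "insert s S \<subseteq> {..<N}" "s \<notin> S"
    and pd: "pos_def_mat (prin_sub P (insert s S))" and A: "is_residual P P S A"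
  shows "A s s > 0"
proof -
  let ?S = "insert s S"
  have fin: "finite ?S" using S(1) finite_subset by auto
  obtain L where L: "\<And>i j. i < N \<Longrightarrow> j < N \<Longrightarrow> A i j = P $$ (i, j) - (\<Sum>t\<in>S. P $$ (i, t) * L t j)"
    and A0: "\<And>t j. t \<in> S \<Longrightarrow> j < N \<Longrightarrow> A t j = 0"
    using A P unfolding is_residual_def by auto
  have sN: "s < N" using S(1) by auto
  define w where "w u = (if u = s then 1 else - L u s)" for u
  define v where "v = vec (card ?S) (\<lambda>a. w (pick ?S a))"
  have "(\<Sum>t\<in>?S. P $$ (u, t) * w t) = A u s" if "u \<in> ?S" for u
  proof -
    have "(\<Sum>t\<in>S. P $$ (u, t) * w t) = - (\<Sum>t\<in>S. P $$ (u, t) * L t s)"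
      using S(2) by (auto simp: w_def sum_negf[symmetric] intro: sum.cong)
    then show ?thesis using fin S(2) L[of u s] that S(1) sN by (auto simp: w_def)
  qed
  then have "v \<bullet> (prin_sub P ?S *\<^sub>v v) = (\<Sum>u\<in>?S. w u * A u s)"
    using quadratic_form_prin_sub[OF P S(1) v_def] by simp
  also have "\<dots> = A s s"
    using fin S(2) A0 sN by (simp add: w_def)
  finally have vAv: "v \<bullet> (prin_sub P ?S *\<^sub>v v) = A s s" .
  obtain a where a: "a < card ?S" "pick ?S a = s"
    using bij_betw_imp_surj_on[OF bij_betw_pick[OF fin]] by (metis imageE insertI1 lessThan_iff)
  then have "v $ a = 1" by (simp add: v_def w_def)
  then have "v \<noteq> 0\<^sub>v (card ?S)" using a(1) by auto
  moreover have "dim_row (prin_sub P ?S) = card ?S" using carrier_prin_sub[OF P S(1)] by simp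
  ultimately have "v \<bullet> (prin_sub P ?S *\<^sub>v v) > 0"
    using pd unfolding pos_def_mat_def v_def by auto
  then show ?thesis using vAv by simp
qed

lemma schur_compl_eq_residual:
  fixes P B :: "real mat" and T :: "nat \<Rightarrow> nat \<Rightarrow> real"
  assumes P: "P \<in> carrier_mat N N" and B: "B \<in> carrier_mat N n"
    and sym: "\<And>i j. i < N \<Longrightarrow> j < N \<Longrightarrow> P $$ (i, j) = P $$ (j, i)"
    and S: "S \<subseteq> {..<N}" and pd: "pos_def_mat (prin_sub P S)"
    and T: "is_residual P B S T" and ij: "i < N" "j < n"
  shows "schur_compl P B S $$ (i, j) = T i j"
proof -
  let ?m = "card S" and ?M = "prin_sub P S" and ?R = "rows_of P S" and ?BS = "rows_of B S"
  have fin: "finite S" using S finite_subset by auto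
  have pS: "pick S a \<in> S" "pick S a < N" if "a < ?m" for a
    using pick_in_set_le[OF that] S by auto
  obtain L where L: "\<And>i j. i < N \<Longrightarrow> j < n \<Longrightarrow> T i j = B $$ (i, j) - (\<Sum>t\<in>S. P $$ (i, t) * L t j)"
    and T0: "\<And>t j. t \<in> S \<Longrightarrow> j < n \<Longrightarrow> T t j = 0"
    using T B unfolding is_residual_def by auto
  have M: "?M \<in> carrier_mat ?m ?m" by (rule carrier_prin_sub[OF P S])
  have Mi: "minv ?M * ?M = 1\<^sub>m ?m" "minv ?M \<in> carrier_mat ?m ?m"
    using pos_def_mat_minv[OF pd] M by auto
  have BS: "?BS \<in> carrier_mat ?m n" by (rule carrier_rows_of[OF B S])
  have Rt: "transpose_mat ?R \<in> carrier_mat N ?m" using carrier_rows_of[OF P S] by simp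
  define l where "l = vec ?m (\<lambda>a. L (pick S a) j)"
  have l: "l \<in> carrier_vec ?m" by (simp add: l_def)
  have Ml: "?M *\<^sub>v l = col ?BS j"
  proof (rule eq_vecI)
    fix a assume "a < dim_vec (col ?BS j)"
    then have a: "a < ?m" using BS by simp
    have "(?M *\<^sub>v l) $ a = (\<Sum>t\<in>S. P $$ (pick S a, t) * L t j)"
      unfolding l_def by (rule prin_sub_mult_vec_pick[OF P S a])
    also have "\<dots> = B $$ (pick S a, j)"
      using L[OF pS(2)[OF a] ij(2)] T0[OF pS(1)[OF a] ij(2)] by simp
    also have "\<dots> = col ?BS j $ a" using index_rows_of[OF B S a ij(2)] BS a ij(2) by simp
    finally show "(?M *\<^sub>v l) $ a = col ?BS j $ a" .
  qed (use M BS in simp)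
  have "col (minv ?M * ?BS) j = minv ?M *\<^sub>v (?M *\<^sub>v l)"
    using col_mult2[OF Mi(2) BS ij(2)] Ml by simp
  also have "\<dots> = l"
    using assoc_mult_mat_vec[OF Mi(2) M l] Mi(1) l by simp
  finally have Kl: "col (minv ?M * ?BS) j = l" .
  have "(transpose_mat ?R * minv ?M * ?BS) $$ (i, j) = row (transpose_mat ?R) i \<bullet> l"
    using assoc_mult_mat[OF Rt Mi(2) BS] Rt Mi(2) BS ij Kl by simp
  also have "\<dots> = (\<Sum>a<?m. P $$ (i, pick S a) * L (pick S a) j)"
    using carrier_rows_of[OF P S] index_rows_of[OF P S] sym pS(2) ij(1)
    by (auto simp: l_def scalar_prod_def atLeast0LessThan intro!: sum.cong)
  also have "\<dots> = (\<Sum>t\<in>S. P $$ (i, t) * L t j)"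
    using sum_pick[OF fin] .
  finally have "(transpose_mat ?R * minv ?M * ?BS) $$ (i, j) = (\<Sum>t\<in>S. P $$ (i, t) * L t j)" .
  moreover have "transpose_mat ?R * minv ?M * ?BS \<in> carrier_mat N n" using Rt Mi(2) BS by simp
  ultimately show ?thesis
    using L[OF ij] ij unfolding schur_compl_def by (subst index_minus_mat(1)) auto
qed

lemma length_XiTh:
  "length (fst (XiTh X Y lam sb k)) = k \<and> length (snd (XiTh X Y lam sb k)) = k"
  by (induction k) (auto simp: Let_def split: prod.split)

lemma nth_XiTh:
  assumes "l < k"
  shows "fst (XiTh X Y lam sb k) ! l = xi X Y lam sb (Suc l)"
    and "snd (XiTh X Y lam sb k) ! l = theta X Y lam sb (Suc l)"
proof -
  have "fst (XiTh X Y lam sb k) ! l = xi X Y lam sb (Suc l) \<and>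
        snd (XiTh X Y lam sb k) ! l = theta X Y lam sb (Suc l)"
    using assms
  proof (induction k)
    case (Suc k)
    show ?case
    proof (cases "l = k")
      case True
      then show ?thesis by (simp add: xi_def theta_def)
    next
      case False
      then have "l < k" using Suc.prems by simp
      then show ?thesis
        using Suc.IH length_XiTh[of X Y lam sb k] by (auto simp: Let_def nth_append split: prod.split)
    qed
  qed simp
  then show "fst (XiTh X Y lam sb k) ! l = xi X Y lam sb (Suc l)"
    and "snd (XiTh X Y lam sb k) ! l = theta X Y lam sb (Suc l)" by simp_all
qed

definition xx_residual :: "real mat \<Rightarrow> real mat \<Rightarrow> real \<Rightarrow> (nat \<Rightarrow> nat) \<Rightarrow> nat \<Rightarrow> nat \<Rightarrow> nat \<Rightarrow> real" where
  "xx_residual X Y lam sb k i j = Pxx X lam $$ (i, j) - (\<Sum>l=1..k. xi X Y lam sb l i * xi X Y lam sb l j)"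

definition xy_residual :: "real mat \<Rightarrow> real mat \<Rightarrow> real \<Rightarrow> (nat \<Rightarrow> nat) \<Rightarrow> nat \<Rightarrow> nat \<Rightarrow> nat \<Rightarrow> real" where
  "xy_residual X Y lam sb k i j = Pxy X Y $$ (i, j) - (\<Sum>l=1..k. xi X Y lam sb l i * theta X Y lam sb l j)"

lemma xi_theta_Suc:
  fixes X Y :: "real mat" and lam :: real and sb :: "nat \<Rightarrow> nat"
  assumes X: "X \<in> carrier_mat N M" and Y: "Y \<in> carrier_mat Ny M" and s: "sb (Suc k) < N"
  defines "d \<equiv> sqrt (xx_residual X Y lam sb k (sb (Suc k)) (sb (Suc k)))"
  shows "i < N \<Longrightarrow> xi X Y lam sb (Suc k) i = xx_residual X Y lam sb k i (sb (Suc k)) / d"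
    and "j < Ny \<Longrightarrow> theta X Y lam sb (Suc k) j = xy_residual X Y lam sb k (sb (Suc k)) j / d"
proof -
  let ?s = "sb (Suc k)" and ?Xi = "fst (XiTh X Y lam sb k)" and ?Th = "snd (XiTh X Y lam sb k)"
  have sum_Xi: "(\<Sum>l<k. (?Xi ! l) i * (?Xi ! l) ?s) = (\<Sum>l=1..k. xi X Y lam sb l i * xi X Y lam sb l ?s)" for i
    by (simp add: sum.atLeast1_atMost_eq nth_XiTh)
  have sum_Th: "(\<Sum>l<k. (?Th ! l) j * (?Xi ! l) ?s) = (\<Sum>l=1..k. xi X Y lam sb l ?s * theta X Y lam sb l j)" for j
    by (simp add: sum.atLeast1_atMost_eq nth_XiTh mult.commute)
  have dx: "(X * transpose_mat X) $$ (i, ?s) + (if i = ?s then lam else 0) - (\<Sum>l<k. (?Xi ! l) i * (?Xi ! l) ?s)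
      = xx_residual X Y lam sb k i ?s" if "i < N" for i
    using X s that by (simp add: xx_residual_def Pxx_def sum_Xi)
  have dy: "(Y * transpose_mat X) $$ (j, ?s) - (\<Sum>l<k. (?Th ! l) j * (?Xi ! l) ?s)
      = xy_residual X Y lam sb k ?s j" if "j < Ny" for j
    using X Y s that by (simp add: xy_residual_def Pxy_def sum_Th comm_scalar_prod[of _ M])
  have "xi X Y lam sb (Suc k) = (\<lambda>i. ((X * transpose_mat X) $$ (i, ?s) + (if i = ?s then lam else 0)
            - (\<Sum>l<k. (?Xi ! l) i * (?Xi ! l) ?s)) / sqrt ((X * transpose_mat X) $$ (?s, ?s) + lam
            - (\<Sum>l<k. (?Xi ! l) ?s * (?Xi ! l) ?s)))"
   and "theta X Y lam sb (Suc k) = (\<lambda>j. ((Y * transpose_mat X) $$ (j, ?s)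
            - (\<Sum>l<k. (?Th ! l) j * (?Xi ! l) ?s)) / sqrt ((X * transpose_mat X) $$ (?s, ?s) + lam
            - (\<Sum>l<k. (?Xi ! l) ?s * (?Xi ! l) ?s)))"
    using length_XiTh[of X Y lam sb k]
    by (auto simp: xi_def theta_def Let_def nth_append split: prod.split)
  then show "i < N \<Longrightarrow> xi X Y lam sb (Suc k) i = xx_residual X Y lam sb k i ?s / d"
    and "j < Ny \<Longrightarrow> theta X Y lam sb (Suc k) j = xy_residual X Y lam sb k ?s j / d"
    using dx dy dx[OF s] by (simp_all add: d_def)
qed

lemma xx_residual_Suc:
  "xx_residual X Y lam sb (Suc k) i j
     = xx_residual X Y lam sb k i j - xi X Y lam sb (Suc k) i * xi X Y lam sb (Suc k) j"
  by (simp add: xx_residual_def)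

lemma xy_residual_Suc:
  "xy_residual X Y lam sb (Suc k) i j
     = xy_residual X Y lam sb k i j - xi X Y lam sb (Suc k) i * theta X Y lam sb (Suc k) j"
  by (simp add: xy_residual_def)

lemma Pxx_sym:
  assumes "X \<in> carrier_mat N M" and "i < N" "j < N"
  shows "Pxx X lam $$ (i, j) = Pxx X lam $$ (j, i)"
  using assms by (simp add: Pxx_def comm_scalar_prod[of _ M])

lemma xx_residual_sym:
  assumes "X \<in> carrier_mat N M" and "i < N" "j < N"
  shows "xx_residual X Y lam sb k i j = xx_residual X Y lam sb k j i"
  using Pxx_sym[OF assms] by (simp add: xx_residual_def mult.commute)

lemma residual_Suc_eq_elimination:
  fixes X Y :: "real mat" and lam :: real and sb :: "nat \<Rightarrow> nat"
  assumes X: "X \<in> carrier_mat N M" and Y: "Y \<in> carrier_mat Ny M" and s: "sb (Suc k) < N"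
    and nonneg: "xx_residual X Y lam sb k (sb (Suc k)) (sb (Suc k)) \<ge> 0"
  defines "R \<equiv> xx_residual X Y lam sb k" and "s' \<equiv> sb (Suc k)"
  shows "i < N \<Longrightarrow> j < N \<Longrightarrow>
           xx_residual X Y lam sb (Suc k) i j = R i j - R i s' * R s' j / R s' s'"
    and "i < N \<Longrightarrow> j < Ny \<Longrightarrow>
           xy_residual X Y lam sb (Suc k) i j
             = xy_residual X Y lam sb k i j - R i s' * xy_residual X Y lam sb k s' j / R s' s'"
proof -
  have sq: "sqrt (R s' s') * sqrt (R s' s') = R s' s'" using nonneg by (simp add: R_def s'_def)
  note xt = xi_theta_Suc[where sb = sb and k = k and lam = lam, OF X Y s, folded R_def s'_def]
  show "xx_residual X Y lam sb (Suc k) i j = R i j - R i s' * R s' j / R s' s'" if "i < N" "j < N"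
    using xt(1)[OF that(1)] xt(1)[OF that(2)] sq xx_residual_sym[OF X that(2) s]
    by (simp add: xx_residual_Suc R_def s'_def field_simps)
  show "xy_residual X Y lam sb (Suc k) i j
          = xy_residual X Y lam sb k i j - R i s' * xy_residual X Y lam sb k s' j / R s' s'"
    if "i < N" "j < Ny"
    using xt(1)[OF that(1)] xt(2)[OF that(2)] sq
    by (simp add: xy_residual_Suc field_simps)
qed

lemma Sbar_0: "Sbar sb 0 = {}"
  by (simp add: Sbar_def)

lemma Sbar_Suc: "Sbar sb (Suc k) = insert (sb (Suc k)) (Sbar sb k)"
  by (simp add: Sbar_def atLeastAtMostSuc_conv)

context
  fixes N Ny M p :: nat and X Y :: "real mat" and lam :: real and sb :: "nat \<Rightarrow> nat"
  assumes X: "X \<in> carrier_mat N M" and Y: "Y \<in> carrier_mat Ny M"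
    and greedy: "is_greedy X Y lam p sb"
begin

lemma greedy_step:
  assumes "Suc k \<le> p"
  shows "sb (Suc k) < N" and "sb (Suc k) \<notin> Sbar sb k" and "feasible X lam (Sbar sb (Suc k))"
proof -
  have "sb (Suc k) \<in> Ifeas X lam sb (Suc k)"
    using greedy assms unfolding is_greedy_def by auto
  then show "sb (Suc k) < N" "sb (Suc k) \<notin> Sbar sb k" "feasible X lam (Sbar sb (Suc k))"
    using X unfolding Ifeas_def by (auto simp: Sbar_Suc)
qed

lemma Sbar_subset: "k \<le> p \<Longrightarrow> Sbar sb k \<subseteq> {..<N}"
  by (induction k) (auto simp: Sbar_0 Sbar_Suc greedy_step(1))

lemma is_residual_greedy:
  assumes "k \<le> p"
  shows "is_residual (Pxx X lam) (Pxx X lam) (Sbar sb k) (xx_residual X Y lam sb k)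
       \<and> is_residual (Pxx X lam) (Pxy X Y) (Sbar sb k) (xy_residual X Y lam sb k)"
  using assms
proof (induction k)
  case 0
  show ?case by (simp add: is_residual_def Sbar_0 xx_residual_def xy_residual_def)
next
  case (Suc k)
  let ?s = "sb (Suc k)" and ?S = "Sbar sb k"
  have Pxx: "Pxx X lam \<in> carrier_mat N N" and Pxy: "Pxy X Y \<in> carrier_mat N Ny"
    using X Y by (simp_all add: Pxx_def Pxy_def)
  note step = greedy_step[OF Suc.prems]
  have sub: "insert ?s ?S \<subseteq> {..<N}" using Sbar_subset[OF Suc.prems] by (simp add: Sbar_Suc)
  have IH: "is_residual (Pxx X lam) (Pxx X lam) ?S (xx_residual X Y lam sb k)"
    "is_residual (Pxx X lam) (Pxy X Y) ?S (xy_residual X Y lam sb k)"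
    using Suc by simp_all
  have pivot: "xx_residual X Y lam sb k ?s ?s > 0"
    using is_residual_pivot_pos[OF Pxx sub step(2) _ IH(1)] step(3)
    by (simp add: feasible_def Sbar_Suc)
  note elim = residual_Suc_eq_elimination[where lam = lam, OF X Y step(1) less_imp_le[OF pivot]]
  have "is_residual (Pxx X lam) (Pxx X lam) (insert ?s ?S) (xx_residual X Y lam sb (Suc k))"
    using pivot elim(1) by (intro is_residual_insert[OF Pxx Pxx sub step(2) IH(1) _ IH(1)]) auto
  moreover have "is_residual (Pxx X lam) (Pxy X Y) (insert ?s ?S) (xy_residual X Y lam sb (Suc k))"
    using pivot elim(2) by (intro is_residual_insert[OF Pxx Pxy sub step(2) IH(1) _ IH(2)]) auto
  ultimately show ?case by (simp add: Sbar_Suc)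
qed

lemma Sbar_greedy_pos_def:
  assumes "k \<le> p" and "k \<noteq> 0"
  shows "Sbar sb k \<noteq> {}" and "pos_def_mat (prin_sub (Pxx X lam) (Sbar sb k))"
proof -
  obtain k' where k': "k = Suc k'" using assms(2) not0_implies_Suc by blast
  then show "Sbar sb k \<noteq> {}" by (simp add: Sbar_Suc)
  show "pos_def_mat (prin_sub (Pxx X lam) (Sbar sb k))"
    using greedy_step(3)[of k'] assms(1) k' by (simp add: feasible_def)
qed

lemma Qxx_greedy:
  assumes k: "k \<le> p" and ij: "i < N" "j < N"
  shows "Qxx X lam (Sbar sb k) $$ (i, j) = xx_residual X Y lam sb k i j"
proof (cases "k = 0")
  case True
  then show ?thesis by (simp add: Qxx_def Sbar_0 xx_residual_def)
next
  case False
  have Pxx: "Pxx X lam \<in> carrier_mat N N" using X by (simp add: Pxx_def)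
  show ?thesis
    using schur_compl_eq_residual[OF Pxx Pxx Pxx_sym[OF X] Sbar_subset[OF k]
        Sbar_greedy_pos_def(2)[OF k False] conjunct1[OF is_residual_greedy[OF k]] ij]
      Sbar_greedy_pos_def(1)[OF k False]
    by (simp add: Qxx_def schur_compl_def)
qed

lemma Qxy_greedy:
  assumes k: "k \<le> p" and ij: "i < N" "j < Ny"
  shows "Qxy X Y lam (Sbar sb k) $$ (i, j) = xy_residual X Y lam sb k i j"
proof (cases "k = 0")
  case True
  then show ?thesis by (simp add: Qxy_def Sbar_0 xy_residual_def)
next
  case False
  have Pxx: "Pxx X lam \<in> carrier_mat N N" and Pxy: "Pxy X Y \<in> carrier_mat N Ny"
    using X Y by (simp_all add: Pxx_def Pxy_def)
  show ?thesis
    using schur_compl_eq_residual[OF Pxx Pxy Pxx_sym[OF X] Sbar_subset[OF k]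
        Sbar_greedy_pos_def(2)[OF k False] conjunct2[OF is_residual_greedy[OF k]] ij]
      Sbar_greedy_pos_def(1)[OF k False]
    by (simp add: Qxy_def schur_compl_def)
qed

end

lemma sum_square_diff_scaled:
  fixes a t :: "nat \<Rightarrow> real"
  shows "(\<Sum>j<n. (a j - x * t j)^2)
           = (\<Sum>j<n. (a j)^2) - x * (2 * (\<Sum>j<n. a j * t j) - (\<Sum>j<n. (t j)^2) * x)"
proof -
  have "(\<Sum>j<n. (a j - x * t j)^2) = (\<Sum>j<n. (a j)^2 - 2 * x * (a j * t j) + x * x * (t j)^2)"
    by (rule sum.cong) (simp_all add: power2_eq_square algebra_simps)
  also have "\<dots> = (\<Sum>j<n. (a j)^2) - 2 * x * (\<Sum>j<n. a j * t j) + x * x * (\<Sum>j<n. (t j)^2)"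
    by (simp add: sum.distrib sum_subtractf sum_distrib_left)
  finally show ?thesis by (simp add: algebra_simps)
qed

lemma xy_residual_inner:
  "(\<Sum>j<n. xy_residual X Y lam sb k i j * c j)
     = (\<Sum>j<n. (X * transpose_mat Y) $$ (i, j) * c j)
       - (\<Sum>l=1..k. xi X Y lam sb l i * (\<Sum>j<n. theta X Y lam sb l j * c j))"
proof -
  have "(\<Sum>j<n. xy_residual X Y lam sb k i j * c j)
     = (\<Sum>j<n. (X * transpose_mat Y) $$ (i, j) * c j)
       - (\<Sum>j<n. \<Sum>l=1..k. xi X Y lam sb l i * (theta X Y lam sb l j * c j))"
    by (simp add: xy_residual_def Pxy_def left_diff_distrib sum_distrib_right sum_subtractf mult.assoc)
  also have "(\<Sum>j<n. \<Sum>l=1..k. xi X Y lam sb l i * (theta X Y lam sb l j * c j))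
      = (\<Sum>l=1..k. xi X Y lam sb l i * (\<Sum>j<n. theta X Y lam sb l j * c j))"
    by (subst sum.swap) (simp add: sum_distrib_left)
  finally show ?thesis .
qed

theorem theorem2:
  fixes N Ny M p :: nat and X Y :: "real mat" and lam :: real and sb :: "nat \<Rightarrow> nat" and k i :: nat
  assumes "X \<in> carrier_mat N M" and "Y \<in> carrier_mat Ny M"
    and "p \<le> N" and "lam \<ge> 0"
    and "is_greedy X Y lam p sb"
    and "k \<in> {1..p}" and "i \<in> Ifeas X lam sb k"
  shows "f_val X Y lam sb k i = f_val X Y lam sb (k - 1) i
           - xi X Y lam sb k i *
             (2 * (\<Sum>j<Ny. (X * transpose_mat Y) $$ (i, j) * theta X Y lam sb k j)
              - 2 * (\<Sum>l\<in>{1..<k}. xi X Y lam sb l i *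
                        (\<Sum>j<Ny. theta X Y lam sb l j * theta X Y lam sb k j))
              - (\<Sum>j<Ny. (theta X Y lam sb k j)^2) * xi X Y lam sb k i)
         \<and> g_val X lam sb k i = g_val X lam sb (k - 1) i - xi X Y lam sb k i * xi X Y lam sb k i"
proof
  obtain k' where k: "k = Suc k'" and kp: "Suc k' \<le> p" using assms(6) by (cases k) auto
  have i: "i < N" using assms(1,7) by (simp add: Ifeas_def)
  have dim_Y: "dim_row Y = Ny" using assms(2) by simp
  note Qxx = Qxx_greedy[OF assms(1,2,5) _ i] and Qxy = Qxy_greedy[OF assms(1,2,5) _ i]
  let ?x = "xi X Y lam sb k i" and ?t = "theta X Y lam sb k"
  have "{1..k'} = {1..<k}" using k by auto
  then have inner: "(\<Sum>j<Ny. xy_residual X Y lam sb k' i j * ?t j)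
      = (\<Sum>j<Ny. (X * transpose_mat Y) $$ (i, j) * ?t j)
        - (\<Sum>l\<in>{1..<k}. xi X Y lam sb l i * (\<Sum>j<Ny. theta X Y lam sb l j * ?t j))"
    by (simp only: xy_residual_inner)
  have "f_val X Y lam sb k i = (\<Sum>j<Ny. (xy_residual X Y lam sb k' i j - ?x * ?t j)^2)"
    using Qxy[OF kp] by (simp add: f_val_def dim_Y k xy_residual_Suc)
  also have "\<dots> = f_val X Y lam sb (k - 1) i
      - ?x * (2 * (\<Sum>j<Ny. xy_residual X Y lam sb k' i j * ?t j) - (\<Sum>j<Ny. (?t j)^2) * ?x)"
    using Qxy[OF Suc_leD[OF kp]] by (simp add: sum_square_diff_scaled f_val_def dim_Y k)
  finally show "f_val X Y lam sb k i = f_val X Y lam sb (k - 1) i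
      - ?x * (2 * (\<Sum>j<Ny. (X * transpose_mat Y) $$ (i, j) * ?t j)
              - 2 * (\<Sum>l\<in>{1..<k}. xi X Y lam sb l i * (\<Sum>j<Ny. theta X Y lam sb l j * ?t j))
              - (\<Sum>j<Ny. (?t j)^2) * ?x)"
    unfolding inner by (simp add: right_diff_distrib)
  show "g_val X lam sb k i = g_val X lam sb (k - 1) i - xi X Y lam sb k i * xi X Y lam sb k i"
    using Qxx[OF kp i] Qxx[OF Suc_leD[OF kp] i] by (simp add: g_val_def k xx_residual_Suc)
qed

end
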